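(* Assume (A1) and (A2), and let $\{\gamma_n\}_{n\ge1}$ be any deterministic $[0,1)$-valued sequence. Then there exists a constant $p\in(0,1]$, depending only on $d,\gamma_1,\inf_{\mathsf X^2}q,\sup_{\mathsf X}\pi$ and $\min_i\theta_\star(i)$ (in particular not on $k$), such that for every $k\ge0$ with $\mathbb P(T_k<\infty)=1$, almost surely, $$\forall m\in\mathbb N,\qquad \mathbb P\big(A_m\,\big|\,\mathcal F_{T_k+md}\big)\ge p.$$ (One can take $p=\frac{1-\gamma_1}{1+\gamma_1}\big(c\,\min_i\theta_\star(i)\big)^d$ with $c=\inf_{\mathsf X^2}q/\sup_{\mathsf X}\pi$.)
   Context: Setting: $(\mathsf X,\mathcal X)$ Polish space with Borel $\sigma$-algebra and $\sigma$-finite reference measure $\lambda$; $\pi$ a probability density w.r.t. $\lambda$; $d\ge2$; $\mathsf X_1,\dots,\mathsf X_d$ a measurable partition of $\mathsf X$; $I(x)=i$ iff $x\in\mathsf X_i$; $\theta_\star(i)=\int_{\mathsf X_i}\pi\,d\lambda$; $\Theta=\{\theta\in(0,1)^d:\sum_i\theta(i)=1\}$; $\pi_\theta(x)=\big(\sum_{i}\theta_\star(i)/\theta(i)\big)^{-1}\sum_{i}\frac{\pi(x)}{\theta(i)}\mathbf 1_{\mathsf X_i}(x)$. (A1): $0<\inf\pi\le\sup\pi<\infty$ and $\min_i\theta_\star(i)>0$. (A2): $P_\theta$ is the Metropolis–Hastings kernel with target $\pi_\theta\,d\lambda$ and symmetric proposal density $q$ w.r.t. $\lambda$ with $\inf_{\mathsf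 X^2}q>0$. Linearized Wang–Landau algorithm: $X_0\in\mathsf X$, $\theta_0\in\Theta$; $X_{n+1}\sim P_{\theta_n}(X_n,\cdot)$ conditionally on $\mathcal F_n=\sigma(\theta_0,X_0,\dots,X_n)$; $\theta_{n+1}=\theta_n+\gamma_{n+1}H(X_{n+1},\theta_n)$ with $H_i(x,\theta)=\theta(i)(\mathbf 1_{\mathsf X_i}(x)-\theta(I(x)))$. Notation: $\underline\theta_n=\min_j\theta_n(j)$; $I_n=\min\{i:\theta_n(i)=\underline\theta_n\}$; $T_0=0$, $T_k=\inf\{n>T_{k-1}:X_n\in\mathsf X_{I_n}\}$. For fixed $k$ and $m\in\mathbb N$ (on $\{T_k<\infty\}$), let $((1)_m,\dots,(d)_m)$ be a permutation of $\{1,\dots,d\}$ (ties broken by smallest index) such that $\theta_{T_k+md}((1)_m)\le\dots\le\theta_{T_k+md}((d)_m)$; let $i_m=\max\{i\le d:\ \theta_{T_k+md}((i)_m)<\underline\theta_{T_k+md}(1+\gamma_1)/(1-\gamma_1)\}$ and $A_m=\{X_{T_k+md+1}\in\mathsf X_{(i_m)_m},\ X_{T_k+md+2}\in\mathsf X_{(i_m-1)_m},\dots,X_{T_k+md+i_m}\in\mathsf X_{(1)_m}\}$. *)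

theory Defs
  imports "HOL-Probability.Probability"
begin

text \<open>Indices of the partition are 1..d.  The label function I maps x to the index i with x in X_i.\<close>

definition theta_star :: "'a measure \<Rightarrow> ('a \<Rightarrow> real) \<Rightarrow> ('a \<Rightarrow> nat) \<Rightarrow> nat \<Rightarrow> real" where
  "theta_star lam \<pi> I i = (LINT x:{x \<in> space lam. I x = i}|lam. \<pi> x)"

definition Theta :: "nat \<Rightarrow> (nat \<Rightarrow> real) set" where
  "Theta d = {\<theta>. (\<forall>i\<in>{1..d}. 0 < \<theta> i \<and> \<theta> i < 1) \<and> (\<Sum>i=1..d. \<theta> i) = 1}"

definition pi_theta ::
  "nat \<Rightarrow> 'a measure \<Rightarrow> ('a \<Rightarrow> real) \<Rightarrow> ('a \<Rightarrow> nat) \<Rightarrow> (nat \<Rightarrow> real) \<Rightarrow> 'a \<Rightarrow> real" where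
  "pi_theta d lam \<pi> I \<theta> x =
     inverse (\<Sum>i=1..d. theta_star lam \<pi> I i / \<theta> i) * (\<Sum>i=1..d. \<pi> x / \<theta> i * indicator {y. I y = i} x)"

definition MH_kernel :: "'a measure \<Rightarrow> ('a \<Rightarrow> 'a \<Rightarrow> real) \<Rightarrow> ('a \<Rightarrow> real) \<Rightarrow> 'a \<Rightarrow> 'a set \<Rightarrow> real" where
  "MH_kernel lam q f x A =
     (LINT y:A|lam. q x y * min 1 (f y / f x))
     + indicator A x * (1 - (LINT y|lam. q x y * min 1 (f y / f x)))"

definition H_field :: "('a \<Rightarrow> nat) \<Rightarrow> 'a \<Rightarrow> (nat \<Rightarrow> real) \<Rightarrow> nat \<Rightarrow> real" where
  "H_field I x \<theta> i = \<theta> i * (indicator {y. I y = i} x - \<theta> (I x))"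

primrec wl_theta :: "(nat \<Rightarrow> real) \<Rightarrow> ('a \<Rightarrow> nat) \<Rightarrow> (nat \<Rightarrow> real) \<Rightarrow> (nat \<Rightarrow> 'a) \<Rightarrow> nat \<Rightarrow> nat \<Rightarrow> real" where
  "wl_theta \<gamma> I th0 xs 0 = th0"
| "wl_theta \<gamma> I th0 xs (Suc n) =
     (\<lambda>i. wl_theta \<gamma> I th0 xs n i + \<gamma> (Suc n) * H_field I (xs (Suc n)) (wl_theta \<gamma> I th0 xs n) i)"

definition theta_min :: "nat \<Rightarrow> (nat \<Rightarrow> real) \<Rightarrow> real" where
  "theta_min d \<theta> = Min (\<theta> ` {1..d})"

definition argmin_idx :: "nat \<Rightarrow> (nat \<Rightarrow> real) \<Rightarrow> nat" where
  "argmin_idx d \<theta> = (LEAST i. 1 \<le> i \<and> i \<le> d \<and> \<theta> i = theta_min d \<theta>)"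

primrec hit_time :: "nat \<Rightarrow> (nat \<Rightarrow> nat \<Rightarrow> real) \<Rightarrow> ('a \<Rightarrow> nat) \<Rightarrow> (nat \<Rightarrow> 'a) \<Rightarrow> nat \<Rightarrow> enat" where
  "hit_time d th I xs 0 = enat 0"
| "hit_time d th I xs (Suc k) =
     (case hit_time d th I xs k of
        \<infinity> \<Rightarrow> \<infinity>
      | enat t \<Rightarrow> (if \<exists>n>t. I (xs n) = argmin_idx d (th n)
                   then enat (LEAST n. t < n \<and> I (xs n) = argmin_idx d (th n))
                   else \<infinity>))"

text \<open>The ordering permutation: ord_idx d theta i = (i), for i in 1..d, sorting increasingly by theta,
  ties broken by smallest index (sort_key is stable).\<close>
definition ord_idx :: "nat \<Rightarrow> (nat \<Rightarrow> real) \<Rightarrow> nat \<Rightarrow> nat" where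
  "ord_idx d \<theta> i = sort_key \<theta> [1..<Suc d] ! (i - 1)"

text \<open>i_m = max{i <= d : theta((i)) < underline theta (1+g)/(1-g)}, with the convention i_m = 0 if
  this set is empty (then A_m is the sure event).\<close>
definition i_max :: "nat \<Rightarrow> real \<Rightarrow> (nat \<Rightarrow> real) \<Rightarrow> nat" where
  "i_max d g \<theta> = Max ({0} \<union> {i \<in> {1..d}. \<theta> (ord_idx d \<theta> i) < theta_min d \<theta> * (1 + g) / (1 - g)})"

text \<open>Natural filtration F_n = sigma(X_0, ..., X_n) (theta_0 is deterministic).\<close>
definition nat_filtration :: "'b measure \<Rightarrow> 'a measure \<Rightarrow> (nat \<Rightarrow> 'b \<Rightarrow> 'a) \<Rightarrow> nat \<Rightarrow> 'b measure" where
  "nat_filtration M N X n =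
     sigma (space M) (\<Union>j\<in>{..n}. {X j -` A \<inter> space M | A. A \<in> sets N})"

definition stopped_sigma :: "'b measure \<Rightarrow> (nat \<Rightarrow> 'b measure) \<Rightarrow> ('b \<Rightarrow> enat) \<Rightarrow> 'b measure" where
  "stopped_sigma M F \<tau> =
     sigma (space M) {A \<in> sets M. \<forall>n::nat. {\<omega> \<in> A. \<tau> \<omega> \<le> enat n} \<in> sets (F n)}"

end

theory Submission
  imports Defs
begin

(*
  The weights theta_n of the linearized Wang--Landau algorithm are a deterministic
  function of the label path l_j = I(X_j), j <= n (theta_lab).  On A_m the chain, started at
  time n = T_k + m d, visits the cells (i_m)_m, (i_m - 1)_m, ..., (1)_m in this order ("climbs
  the ladder").  Each prescribed move has conditional probability at least
  c theta_star(v) min(1, theta(current cell) / theta(target)) by a lower bound on the MH kernel,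
  where c = inf q / sup pi.  For the first move the ratio is at least rho = (1-g)/(1+g) by the
  definition of i_m; for the later moves it is at least 1, because the chain then sits in
  (i_m - r + 1)_m, whose weight dominated that of the target at time n, and an unvisited cell
  cannot overtake another one (wl_update_order).  Chaining d moves gives, for every F_n-event H,
  P(H and the ladder is climbed from n) >= rho b^d P(H) with b = c min theta_star.  Slicing an
  event prior to T_k + m d by the value of that time turns this into the same inequality for
  all events of the stopped sigma-algebra, which characterises the claimed a.s. lower bound on
  the conditional probability (cond_exp_ge_from_prob).
*)

definition wl_update :: "real \<Rightarrow> nat \<Rightarrow> (nat \<Rightarrow> real) \<Rightarrow> nat \<Rightarrow> real" where
  "wl_update g w t = (\<lambda>i. t i + g * (t i * ((if w = i then 1 else 0) - t w)))"

text \<open>The weights theta_n as a function of the label path ls (ls j = I(X_j)).\<close>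
primrec theta_lab :: "(nat \<Rightarrow> real) \<Rightarrow> (nat \<Rightarrow> real) \<Rightarrow> (nat \<Rightarrow> nat) \<Rightarrow> nat \<Rightarrow> nat \<Rightarrow> real" where
  "theta_lab \<gamma> th0 ls 0 = th0"
| "theta_lab \<gamma> th0 ls (Suc n) = wl_update (\<gamma> (Suc n)) (ls (Suc n)) (theta_lab \<gamma> th0 ls n)"

lemma wl_theta_eq_theta_lab: "wl_theta \<gamma> I th0 xs n = theta_lab \<gamma> th0 (\<lambda>j. I (xs j)) n"
  by (induction n) (auto simp: H_field_def indicator_def wl_update_def fun_eq_iff)

lemma theta_lab_cong:
  "(\<And>j. j \<le> n \<Longrightarrow> ls j = ls' j) \<Longrightarrow> theta_lab \<gamma> th0 ls n = theta_lab \<gamma> th0 ls' n"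
  by (induction n) auto

definition prob_simplex :: "nat \<Rightarrow> (nat \<Rightarrow> real) set" where
  "prob_simplex d = {t. (\<forall>i\<in>{1..d}. 0 < t i) \<and> (\<Sum>i=1..d. t i) = 1}"

lemma Theta_subset_simplex: "Theta d \<subseteq> prob_simplex d"
  unfolding Theta_def prob_simplex_def by auto

lemma prob_simplex_pos: "t \<in> prob_simplex d \<Longrightarrow> i \<in> {1..d} \<Longrightarrow> 0 < t i"
  unfolding prob_simplex_def by blast

lemma prob_simplex_le1:
  assumes "t \<in> prob_simplex d" "i \<in> {1..d}"
  shows "t i \<le> 1"
proof -
  have "t i \<le> (\<Sum>j=1..d. t j)"
    using assms by (intro member_le_sum) (auto simp: prob_simplex_def less_imp_le)
  then show ?thesis using assms(1) by (simp add: prob_simplex_def)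
qed

lemma wl_update_visited: "wl_update g w t w = t w + g * (t w * (1 - t w))"
  by (simp add: wl_update_def)

lemma wl_update_other: "i \<noteq> w \<Longrightarrow> wl_update g w t i = t i * (1 - g * t w)"
  by (simp add: wl_update_def algebra_simps)

lemma shrink_factor_bounds:
  assumes "t \<in> prob_simplex d" "w \<in> {1..d}" "0 \<le> g" "g < 1"
  shows "0 < 1 - g * t w" "1 - g * t w \<le> 1"
proof -
  have "g * t w \<le> g * 1"
    using assms prob_simplex_le1[OF assms(1,2)] by (intro mult_left_mono) auto
  then show "0 < 1 - g * t w" using assms(4) by simp
  show "1 - g * t w \<le> 1" using assms prob_simplex_pos[OF assms(1,2)] by simp
qed

lemma wl_update_simplex:
  assumes t: "t \<in> prob_simplex d" and w: "w \<in> {1..d}" and g: "0 \<le> g" "g < 1"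
  shows "wl_update g w t \<in> prob_simplex d"
proof -
  have pos: "0 < wl_update g w t i" if i: "i \<in> {1..d}" for i
  proof (cases "i = w")
    case True
    have "0 \<le> g * (t w * (1 - t w))"
      using g prob_simplex_pos[OF t w] prob_simplex_le1[OF t w] by simp
    then show ?thesis using True prob_simplex_pos[OF t w] by (simp add: wl_update_visited)
  next
    case False
    then show ?thesis
      using prob_simplex_pos[OF t i] shrink_factor_bounds[OF t w g] by (simp add: wl_update_other)
  qed
  have "(\<Sum>i=1..d. wl_update g w t i)
      = (\<Sum>i=1..d. t i) + g * ((\<Sum>i=1..d. if w = i then t i else 0) - t w * (\<Sum>i=1..d. t i))"
    by (simp add: wl_update_def algebra_simps sum.distrib sum_subtractf sum_distrib_left
          if_distrib[where f="\<lambda>x. _ * x"] cong: if_cong)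
  also have "\<dots> = 1"
    using t w by (simp add: prob_simplex_def sum.delta)
  finally show ?thesis using pos by (simp add: prob_simplex_def)
qed

text \<open>A coordinate that is not visited cannot overtake a coordinate it lies below:
  unvisited coordinates are all multiplied by the same factor, the visited one grows.\<close>
lemma wl_update_order:
  assumes t: "t \<in> prob_simplex d" and w: "w \<in> {1..d}" and g: "0 \<le> g" "g < 1"
    and u: "u \<in> {1..d}" and v: "v \<in> {1..d}" and le: "t v \<le> t u" and wv: "w \<noteq> v"
  shows "wl_update g w t v \<le> wl_update g w t u"
proof (cases "w = u")
  case True
  have "wl_update g w t v \<le> t v"
    using wv shrink_factor_bounds[OF t w g] prob_simplex_pos[OF t v]
    by (simp add: wl_update_other mult_left_le)
  moreover have "t u \<le> wl_update g w t u"
    using True g prob_simplex_pos[OF t u] prob_simplex_le1[OF t u] by (simp add: wl_update_visited)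
  ultimately show ?thesis using le by linarith
next
  case False
  then show ?thesis
    using wv le shrink_factor_bounds[OF t w g]
    by (simp add: wl_update_other mult_right_mono)
qed

lemma theta_lab_simplex:
  assumes "th0 \<in> prob_simplex d" "\<forall>n\<ge>1. 0 \<le> \<gamma> n \<and> \<gamma> n < 1" "\<forall>j. ls j \<in> {1..d}"
  shows "theta_lab \<gamma> th0 ls n \<in> prob_simplex d"
  using assms by (induction n) (auto intro: wl_update_simplex)

lemma theta_lab_order:
  assumes th0: "th0 \<in> prob_simplex d" and g: "\<forall>n\<ge>1. 0 \<le> \<gamma> n \<and> \<gamma> n < 1"
    and ls: "\<forall>j. ls j \<in> {1..d}" and u: "u \<in> {1..d}" and v: "v \<in> {1..d}"
    and le: "theta_lab \<gamma> th0 ls n v \<le> theta_lab \<gamma> th0 ls n u"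
    and unvisited: "\<forall>j\<in>{1..k}. ls (n + j) \<noteq> v"
  shows "theta_lab \<gamma> th0 ls (n + k) v \<le> theta_lab \<gamma> th0 ls (n + k) u"
  using unvisited
proof (induction k)
  case 0
  then show ?case using le by simp
next
  case (Suc k)
  have "ls (n + Suc k) \<noteq> v" using Suc.prems by (auto dest: bspec[of _ _ "Suc k"])
  then show ?case
    using Suc theta_lab_simplex[OF th0 g ls] ls u v g
    by (auto intro!: wl_update_order[where d=d])
qed

lemma sorted_labels:
  "length (sort_key \<theta> [1..<Suc d]) = d" "set (sort_key \<theta> [1..<Suc d]) = {1..d}"
  "distinct (sort_key \<theta> [1..<Suc d])" "sorted (map \<theta> (sort_key (\<theta>::nat\<Rightarrow>real) [1..<Suc d]))"
  by (auto simp: length_sort sorted_sort_key)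

lemma ord_idx_range: "i \<in> {1..d} \<Longrightarrow> ord_idx d \<theta> i \<in> {1..d}"
proof -
  assume i: "i \<in> {1..d}"
  have "sort_key \<theta> [1..<Suc d] ! (i - 1) \<in> set (sort_key \<theta> [1..<Suc d])"
    using i sorted_labels(1)[of \<theta> d] by (intro nth_mem) auto
  then show ?thesis using sorted_labels(2)[of \<theta> d] unfolding ord_idx_def by blast
qed

lemma ord_idx_inj: "i \<in> {1..d} \<Longrightarrow> j \<in> {1..d} \<Longrightarrow> ord_idx d \<theta> i = ord_idx d \<theta> j \<Longrightarrow> i = j"
proof -
  assume a: "i \<in> {1..d}" "j \<in> {1..d}" "ord_idx d \<theta> i = ord_idx d \<theta> j"
  have "i - 1 = j - 1"
    using nth_eq_iff_index_eq[OF sorted_labels(3)[of \<theta> d], of "i - 1" "j - 1"] a sorted_labels(1)[of \<theta> d]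
    unfolding ord_idx_def by auto
  then show ?thesis using a by auto
qed

lemma ord_idx_mono: "1 \<le> a \<Longrightarrow> a \<le> b \<Longrightarrow> b \<le> d \<Longrightarrow> \<theta> (ord_idx d \<theta> a) \<le> \<theta> (ord_idx d \<theta> b)"
proof -
  assume ab: "1 \<le> a" "a \<le> b" "b \<le> d"
  have "map \<theta> (sort_key \<theta> [1..<Suc d]) ! (a - 1) \<le> map \<theta> (sort_key \<theta> [1..<Suc d]) ! (b - 1)"
    using sorted_labels[of \<theta> d] ab by (intro sorted_nth_mono) auto
  then show ?thesis unfolding ord_idx_def using sorted_labels(1)[of \<theta> d] ab by simp
qed

lemma i_max_le: "i_max d g \<theta> \<le> d"
  unfolding i_max_def by (subst Max_le_iff) auto

lemma i_max_below_threshold: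
  assumes "1 \<le> i_max d g \<theta>"
  shows "\<theta> (ord_idx d \<theta> (i_max d g \<theta>)) < theta_min d \<theta> * (1 + g) / (1 - g)"
proof -
  let ?S = "{0} \<union> {i \<in> {1..d}. \<theta> (ord_idx d \<theta> i) < theta_min d \<theta> * (1 + g) / (1 - g)}"
  have "i_max d g \<theta> \<in> ?S" unfolding i_max_def by (intro Max_in) auto
  then show ?thesis using assms by auto
qed

lemma theta_min_le: "i \<in> {1..d} \<Longrightarrow> theta_min d \<theta> \<le> \<theta> i"
  unfolding theta_min_def by (intro Min_le) auto

lemma acceptance_lower_bound:
  fixes cq Cp a b qv w :: real
  assumes "0 \<le> cq" "cq \<le> qv" "0 < a" "a \<le> Cp" "0 < b" "b \<le> Cp" "0 < w"
  shows "cq / Cp * min 1 w * a \<le> qv * min 1 (a / b * w)"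
proof -
  define v where "v = a / Cp"
  have v: "0 < v" "v \<le> 1" "v \<le> a / b"
    using assms by (auto simp: v_def intro: divide_left_mono)
  have "v * min 1 w \<le> min 1 (v * w)"
    using v assms(7) by (auto simp: min_def mult_left_le_one_le mult_le_one)
  also have "\<dots> \<le> min 1 (a / b * w)"
    using mult_right_mono[OF v(3), of w] assms(7) by (auto simp: min_def)
  finally have "cq * (v * min 1 w) \<le> qv * min 1 (a / b * w)"
    using assms v by (intro mult_mono) auto
  then show ?thesis using assms by (simp add: v_def field_simps)
qed

lemma MH_flux_bounds:
  fixes f :: "'a \<Rightarrow> real" and q :: "'a \<Rightarrow> 'a \<Rightarrow> real"
  assumes "\<forall>y. 0 < f y" "\<forall>y. 0 \<le> q x y"
  shows "0 \<le> q x y * min 1 (f y / f x)" "q x y * min 1 (f y / f x) \<le> q x y"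
proof -
  have "0 \<le> min 1 (f y / f x)" using assms(1) by (simp add: less_imp_le)
  then show "0 \<le> q x y * min 1 (f y / f x)" "q x y * min 1 (f y / f x) \<le> q x y"
    using assms(2) by (auto simp: mult_left_le)
qed

lemma MH_flux_integrable:
  fixes f :: "'a \<Rightarrow> real" and q :: "'a \<Rightarrow> 'a \<Rightarrow> real"
  assumes f_meas: "f \<in> borel_measurable lam" and f_pos: "\<forall>y. 0 < f y"
    and q_int: "integrable lam (q x)" and q_nn: "\<forall>y. 0 \<le> q x y"
  shows "integrable lam (\<lambda>y. q x y * min 1 (f y / f x))"
proof (rule Bochner_Integration.integrable_bound[OF q_int])
  show "(\<lambda>y. q x y * min 1 (f y / f x)) \<in> borel_measurable lam"
    using borel_measurable_integrable[OF q_int] f_meas by measurable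
  show "AE y in lam. norm (q x y * min 1 (f y / f x)) \<le> norm (q x y)"
    using MH_flux_bounds[of f q x, OF f_pos q_nn] q_nn by auto
qed

text \<open>The rejection term of the MH kernel is nonnegative, so the kernel dominates the
  accepted-move flux into R.\<close>
lemma MH_kernel_ge_flux:
  fixes f :: "'a \<Rightarrow> real" and q :: "'a \<Rightarrow> 'a \<Rightarrow> real"
  assumes f_meas: "f \<in> borel_measurable lam" and f_pos: "\<forall>y. 0 < f y"
    and q_int: "integrable lam (q x)" and q_nn: "\<forall>y. 0 \<le> q x y" and q_dens: "(\<integral>y. q x y \<partial>lam) = 1"
  shows "(LINT y:R|lam. q x y * min 1 (f y / f x)) \<le> MH_kernel lam q f x R"
proof -
  have "(\<integral>y. q x y * min 1 (f y / f x) \<partial>lam) \<le> 1"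
    using integral_mono[OF MH_flux_integrable[of f lam q x, OF assms(1-4)] q_int] MH_flux_bounds[of f q x, OF f_pos q_nn] q_dens
    by simp
  then show ?thesis unfolding MH_kernel_def by (simp add: indicator_def)
qed

lemma pi_theta_eq:
  assumes "\<forall>x. I x \<in> {1..d}"
  shows "pi_theta d lam \<pi> I \<theta> y = inverse (\<Sum>i=1..d. theta_star lam \<pi> I i / \<theta> i) * (\<pi> y / \<theta> (I y))"
proof -
  have "(\<Sum>i=1..d. \<pi> y / \<theta> i * indicator {y. I y = i} y) = (\<Sum>i=1..d. if I y = i then \<pi> y / \<theta> i else 0)"
    by (intro sum.cong) (auto simp: indicator_def)
  also have "\<dots> = \<pi> y / \<theta> (I y)" using assms by (simp add: sum.delta)
  finally show ?thesis unfolding pi_theta_def by simp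
qed

lemma MH_kernel_cell_lower_bound:
  fixes lam :: "'a measure" and \<pi> :: "'a \<Rightarrow> real"
  assumes sp: "space lam = UNIV"
    and pi_meas: "\<pi> \<in> borel_measurable lam" and pi_pos: "\<forall>x. 0 < \<pi> x"
    and pi_le: "\<forall>x. \<pi> x \<le> Cp" and pi_int: "integrable lam \<pi>"
    and I_meas: "I \<in> measurable lam (count_space UNIV)" and I_range: "\<forall>x. I x \<in> {1..d}"
    and thst: "\<forall>i\<in>{1..d}. 0 < theta_star lam \<pi> I i"
    and q_int: "\<forall>x. integrable lam (q x)" and q_dens: "\<forall>x. (\<integral>y. q x y \<partial>lam) = 1"
    and q_lb: "\<forall>x y. cq \<le> q x y" and cq: "0 \<le> cq"
    and th: "\<forall>i\<in>{1..d}. 0 < \<theta> i" and i: "i \<in> {1..d}"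
  shows "cq / Cp * theta_star lam \<pi> I i * min 1 (\<theta> (I x) / \<theta> i)
         \<le> MH_kernel lam q (pi_theta d lam \<pi> I \<theta>) x {y. I y = i}"
proof -
  define Z where "Z = (\<Sum>i=1..d. theta_star lam \<pi> I i / \<theta> i)"
  define f where "f = pi_theta d lam \<pi> I \<theta>"
  define R where "R = {y. I y = i}"
  have Z: "0 < Z" unfolding Z_def using thst th i by (intro sum_pos) auto
  have thI: "0 < \<theta> (I y)" for y using th I_range by auto
  have f_eq: "f y = inverse Z * (\<pi> y / \<theta> (I y))" for y
    unfolding f_def Z_def by (rule pi_theta_eq[OF I_range])
  have f_pos: "\<forall>y. 0 < f y" using Z thI pi_pos by (simp add: f_eq)
  have f_meas: "f \<in> borel_measurable lam"
    using measurable_comp[OF I_meas, of \<theta> borel] pi_meas unfolding f_eq[abs_def] comp_def by measurable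
  have q_nn: "\<forall>y. 0 \<le> q x y" using q_lb cq by (meson order_trans)
  have R: "R \<in> sets lam"
    using measurable_sets[OF I_meas, of "{i}"] sp by (simp add: R_def vimage_def)
  have pointwise: "cq / Cp * min 1 (\<theta> (I x) / \<theta> i) * \<pi> y \<le> q x y * min 1 (f y / f x)"
    if "y \<in> R" for y
  proof -
    have "f y / f x = \<pi> y / \<pi> x * (\<theta> (I x) / \<theta> i)"
      using that Z thI[of x] thI[of y] pi_pos by (simp add: f_eq R_def field_simps)
    then show ?thesis
      using acceptance_lower_bound[of cq "q x y" "\<pi> y" Cp "\<pi> x" "\<theta> (I x) / \<theta> i"]
        cq q_lb pi_pos pi_le thI[of x] th i by simp
  qed
  have "cq / Cp * theta_star lam \<pi> I i * min 1 (\<theta> (I x) / \<theta> i)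
      = (LINT y:R|lam. cq / Cp * min 1 (\<theta> (I x) / \<theta> i) * \<pi> y)"
    unfolding theta_star_def R_def sp by simp
  also have "\<dots> \<le> (LINT y:R|lam. q x y * min 1 (f y / f x))"
  proof (rule set_integral_mono[OF _ _ pointwise])
    show "set_integrable lam R (\<lambda>y. cq / Cp * min 1 (\<theta> (I x) / \<theta> i) * \<pi> y)"
      using R pi_int unfolding set_integrable_def by (intro integrable_mult_indicator) auto
    have "integrable lam (\<lambda>y. q x y * min 1 (f y / f x))"
      using MH_flux_integrable[of f lam q x, OF f_meas f_pos] q_int q_nn by blast
    then show "set_integrable lam R (\<lambda>y. q x y * min 1 (f y / f x))"
      using R unfolding set_integrable_def by (intro integrable_mult_indicator) auto
  qed
  also have "\<dots> \<le> MH_kernel lam q f x R"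
    using MH_kernel_ge_flux[of f lam q x, OF f_meas f_pos] q_int q_nn q_dens by blast
  finally show ?thesis unfolding f_def R_def .
qed

lemma set_integral_indicator:
  "(LINT \<omega>:S|M. indicator A \<omega>) = measure M (S \<inter> A \<inter> space M)"
  unfolding set_lebesgue_integral_def by (simp add: indicator_inter_arith[symmetric])

lemma prob_ge_from_cond_exp:
  assumes "prob_space M" "sigma_finite_subalgebra M F"
    and H: "H \<in> sets F" and Y: "Y \<in> sets M"
    and bound: "AE \<omega>\<in>H in M. a \<le> real_cond_exp M F (indicator Y) \<omega>"
  shows "a * measure M H \<le> measure M (H \<inter> Y)"
proof -
  interpret prob_space M by fact
  interpret sigma_finite_subalgebra M F by fact
  have HM: "H \<in> sets M" using H subalg by (auto simp: subalgebra_def)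
  have Y_int: "integrable M (indicator Y :: _ \<Rightarrow> real)"
    using Y by (simp add: integrable_indicator_iff less_top[symmetric])
  have "a * measure M H = (LINT \<omega>:H|M. a)"
    using HM by (simp add: set_integral_const)
  also have "\<dots> \<le> (LINT \<omega>:H|M. real_cond_exp M F (indicator Y) \<omega>)"
  proof (rule set_integral_mono_AE[OF _ _ bound])
    show "set_integrable M H (\<lambda>\<omega>. a)"
      using HM by (simp add: set_integrable_def integrable_indicator_iff less_top[symmetric])
    show "set_integrable M H (real_cond_exp M F (indicator Y))"
      using HM real_cond_exp_int(1)[OF Y_int] unfolding set_integrable_def
      by (intro integrable_mult_indicator)
  qed
  also have "\<dots> = (LINT \<omega>:H|M. indicator Y \<omega>)"
    by (rule real_cond_exp_intA[OF Y_int H, symmetric])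
  also have "\<dots> = measure M (H \<inter> Y)"
    using HM Y sets.sets_into_space by (simp add: set_integral_indicator Int_absorb2)
  finally show ?thesis .
qed

text \<open>Conversely, if every F-measurable set G satisfies P(G \<inter> A) \<ge> p P(G), then
  E[1_A | F] \<ge> p almost surely: otherwise the F-set where it is below p would violate this.\<close>
lemma cond_exp_ge_from_prob:
  assumes "prob_space M" "sigma_finite_subalgebra M F" and A: "A \<in> sets M"
    and bound: "\<And>G. G \<in> sets F \<Longrightarrow> p * measure M G \<le> measure M (G \<inter> A)"
  shows "AE \<omega> in M. p \<le> real_cond_exp M F (indicator A) \<omega>"
proof -
  interpret prob_space M by fact
  interpret sigma_finite_subalgebra M F by fact
  define g where "g = real_cond_exp M F (indicator A)"
  have A_int: "integrable M (indicator A :: _ \<Rightarrow> real)"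
    using A by (simp add: integrable_indicator_iff less_top[symmetric])
  have g_int: "integrable M g" unfolding g_def by (rule real_cond_exp_int(1)[OF A_int])
  define S where "S = {\<omega>\<in>space M. g \<omega> < p}"
  have SF: "S \<in> sets F"
  proof -
    have "g \<in> borel_measurable F" unfolding g_def by simp
    moreover have "space M = space F" using subalg by (simp add: subalgebra_def)
    ultimately show ?thesis unfolding S_def by simp
  qed
  have SM: "S \<in> sets M" using SF subalg by (auto simp: subalgebra_def)
  define h where "h \<omega> = indicator S \<omega> * (p - g \<omega>)" for \<omega>
  have h_nn: "0 \<le> h \<omega>" for \<omega> by (auto simp: h_def S_def indicator_def)
  have h_int: "integrable M h"
    using integrable_real_mult_indicator[OF SM, of "\<lambda>\<omega>. p - g \<omega>"] g_int
    unfolding h_def[abs_def] by (simp add: mult.commute)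
  have h_eq: "h = (\<lambda>\<omega>. p * indicator S \<omega> - g \<omega> * indicator S \<omega>)"
    by (auto simp: h_def algebra_simps)
  have "integral\<^sup>L M h = p * measure M S - (LINT \<omega>:S|M. g \<omega>)"
    using SM integrable_real_mult_indicator[OF SM g_int] unfolding h_eq set_lebesgue_integral_def
    by (subst Bochner_Integration.integral_diff)
       (auto simp: mult.commute integrable_indicator_iff less_top[symmetric])
  also have "(LINT \<omega>:S|M. g \<omega>) = measure M (S \<inter> A)"
    using real_cond_exp_intA[OF A_int SF] SM A sets.sets_into_space
    by (simp add: g_def set_integral_indicator Int_absorb2)
  finally have "integral\<^sup>L M h \<le> 0" using bound[OF SF] by simp
  then have "AE \<omega> in M. h \<omega> = 0"
    using integral_nonneg_eq_0_iff_AE[OF h_int] h_nn by (simp add: antisym)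
  with AE_space show ?thesis
    by eventually_elim (force simp: h_def S_def g_def indicator_def not_le)
qed

lemma enat_eq_Suc_iff: "e = enat (Suc n) \<longleftrightarrow> e \<le> enat (Suc n) \<and> \<not> e \<le> enat n"
  by (cases e) auto

context
  fixes M :: "'b measure" and F :: "nat \<Rightarrow> 'b measure" and \<tau> :: "'b \<Rightarrow> enat"
begin

lemma stopped_sigma_space: "space (stopped_sigma M F \<tau>) = space M"
  unfolding stopped_sigma_def by (subst space_measure_of) (auto dest: sets.sets_into_space)

lemma stopped_sigma_sets:
  "sets (stopped_sigma M F \<tau>) = sigma_sets (space M) {A \<in> sets M. \<forall>n. {\<omega> \<in> A. \<tau> \<omega> \<le> enat n} \<in> sets (F n)}"
  unfolding stopped_sigma_def by (subst sets_measure_of) (auto dest: sets.sets_into_space)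

lemma stopped_sigma_subalgebra: "subalgebra M (stopped_sigma M F \<tau>)"
  unfolding subalgebra_def stopped_sigma_space stopped_sigma_sets
  by (auto intro!: sets.sigma_sets_subset)

lemma stopped_sigma_finite_subalgebra:
  "prob_space M \<Longrightarrow> sigma_finite_subalgebra M (stopped_sigma M F \<tau>)"
proof -
  assume "prob_space M"
  then interpret prob_space M .
  interpret finite_measure_subalgebra M "stopped_sigma M F \<tau>"
    by unfold_locales (rule stopped_sigma_subalgebra)
  show ?thesis by unfold_locales
qed

lemma stopped_sigma_slice:
  assumes mono: "\<And>n m. n \<le> m \<Longrightarrow> sets (F n) \<subseteq> sets (F m)"
    and level: "\<And>n. {\<omega>\<in>space M. \<tau> \<omega> = enat n} \<in> sets (F n)"
    and A: "A \<in> sets (stopped_sigma M F \<tau>)"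
  shows "{\<omega>\<in>A. \<tau> \<omega> = enat n} \<in> sets (F n)"
  using A[unfolded stopped_sigma_sets]
proof (induction arbitrary: n)
  case (Basic a)
  then have le: "\<And>n. {\<omega> \<in> a. \<tau> \<omega> \<le> enat n} \<in> sets (F n)" by blast
  show ?case
  proof (cases n)
    case 0
    then show ?thesis using le[of 0] by (simp add: zero_enat_def[symmetric])
  next
    case (Suc n')
    have "{\<omega>\<in>a. \<tau> \<omega> = enat n} = {\<omega> \<in> a. \<tau> \<omega> \<le> enat n} - {\<omega> \<in> a. \<tau> \<omega> \<le> enat n'}"
      using Suc enat_eq_Suc_iff by auto
    then show ?thesis using le[of n] le[of n'] mono[of n' n] Suc by auto
  qed
next
  case (Compl a)
  have "{\<omega>\<in>space M - a. \<tau> \<omega> = enat n} = {\<omega>\<in>space M. \<tau> \<omega> = enat n} - {\<omega>\<in>a. \<tau> \<omega> = enat n}"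
    by auto
  then show ?case using level[of n] Compl.IH[of n] by auto
next
  case (Union a)
  have "{\<omega>\<in>\<Union>i. a i. \<tau> \<omega> = enat n} = (\<Union>i. {\<omega>\<in>a i. \<tau> \<omega> = enat n})" by auto
  then show ?case using Union.IH by auto
qed simp

end

lemma (in prob_space) prob_sums_over_time:
  assumes B: "B \<in> events" and fin: "AE \<omega> in M. \<tau> \<omega> \<noteq> \<infinity>"
    and slices: "\<And>n. {\<omega>\<in>B. \<tau> \<omega> = enat n} \<in> events"
  shows "(\<lambda>n. prob {\<omega>\<in>B. \<tau> \<omega> = enat n}) sums prob B"
proof -
  have "(\<lambda>n. prob {\<omega>\<in>B. \<tau> \<omega> = enat n}) sums prob (\<Union>n. {\<omega>\<in>B. \<tau> \<omega> = enat n})"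
    using slices by (intro finite_measure_UNION) (auto simp: disjoint_family_on_def)
  moreover have "prob (\<Union>n. {\<omega>\<in>B. \<tau> \<omega> = enat n}) = prob B"
    using fin slices B by (intro measure_eq_AE) (auto simp: not_infinity_eq)
  ultimately show ?thesis by simp
qed

definition depends_upto :: "nat \<Rightarrow> ((nat \<Rightarrow> nat) \<Rightarrow> bool) \<Rightarrow> bool" where
  "depends_upto n Q \<longleftrightarrow> (\<forall>ls ls'. (\<forall>j\<le>n. ls j = ls' j) \<longrightarrow> Q ls = Q ls')"

lemma depends_upto_mono: "depends_upto a Q \<Longrightarrow> a \<le> b \<Longrightarrow> depends_upto b Q"
  unfolding depends_upto_def by auto

definition hits_min :: "(nat \<Rightarrow> real) \<Rightarrow> (nat \<Rightarrow> real) \<Rightarrow> nat \<Rightarrow> (nat \<Rightarrow> nat) \<Rightarrow> nat \<Rightarrow> bool" where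
  "hits_min \<gamma> th0 d ls n \<longleftrightarrow> ls n = argmin_idx d (theta_lab \<gamma> th0 ls n)"

definition hit_lab :: "(nat \<Rightarrow> real) \<Rightarrow> (nat \<Rightarrow> real) \<Rightarrow> nat \<Rightarrow> (nat \<Rightarrow> nat) \<Rightarrow> nat \<Rightarrow> enat" where
  "hit_lab \<gamma> th0 d ls k = hit_time d (theta_lab \<gamma> th0 ls) id ls k"

lemma hit_time_labels: "hit_time d th I xs k = hit_time d th id (\<lambda>n. I (xs n)) k"
  by (induction k) (auto split: enat.splits)

lemma next_time_eq_enat:
  "((if \<exists>n>s. P n then enat (LEAST n. s < n \<and> P n) else \<infinity>) = enat t) \<longleftrightarrow>
   (s < t \<and> P t \<and> (\<forall>n. s < n \<and> n < t \<longrightarrow> \<not> P n))"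
proof
  assume a: "(if \<exists>n>s. P n then enat (LEAST n. s < n \<and> P n) else \<infinity>) = enat t"
  then have ex: "\<exists>n>s. P n" by (auto split: if_splits)
  with a have t: "t = (LEAST n. s < n \<and> P n)" by simp
  show "s < t \<and> P t \<and> (\<forall>n. s < n \<and> n < t \<longrightarrow> \<not> P n)"
    using LeastI_ex[of "\<lambda>n. s < n \<and> P n"] ex not_less_Least[of _ "\<lambda>n. s < n \<and> P n"] unfolding t by blast
next
  assume b: "s < t \<and> P t \<and> (\<forall>n. s < n \<and> n < t \<longrightarrow> \<not> P n)"
  then have "(LEAST n. s < n \<and> P n) = t"
    by (intro Least_equality) (auto simp: not_less[symmetric])
  then show "(if \<exists>n>s. P n then enat (LEAST n. s < n \<and> P n) else \<infinity>) = enat t" using b by auto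
qed

lemma hit_lab_Suc:
  "hit_lab \<gamma> th0 d ls (Suc k) = enat t \<longleftrightarrow>
   (\<exists>s. hit_lab \<gamma> th0 d ls k = enat s \<and> s < t \<and> hits_min \<gamma> th0 d ls t \<and>
      (\<forall>n. s < n \<and> n < t \<longrightarrow> \<not> hits_min \<gamma> th0 d ls n))"
proof (cases "hit_lab \<gamma> th0 d ls k")
  case (enat s)
  then have e: "hit_lab \<gamma> th0 d ls (Suc k) = (if \<exists>n>s. hits_min \<gamma> th0 d ls n
      then enat (LEAST n. s < n \<and> hits_min \<gamma> th0 d ls n) else \<infinity>)"
    unfolding hit_lab_def hits_min_def by simp
  show ?thesis unfolding e next_time_eq_enat using enat by simp
qed (simp add: hit_lab_def)

lemma hit_lab_transfer:
  assumes "\<forall>j\<le>t. ls j = ls' j" "hit_lab \<gamma> th0 d ls k = enat t"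
  shows "hit_lab \<gamma> th0 d ls' k = enat t"
  using assms
proof (induction k arbitrary: t)
  case 0
  then show ?case by (simp add: hit_lab_def)
next
  case (Suc k)
  have same_hits: "hits_min \<gamma> th0 d ls n = hits_min \<gamma> th0 d ls' n" if "n \<le> t" for n
    using Suc.prems(1) that theta_lab_cong[of n ls ls' \<gamma> th0] by (simp add: hits_min_def)
  obtain s where s: "hit_lab \<gamma> th0 d ls k = enat s" "s < t" "hits_min \<gamma> th0 d ls t"
    "\<forall>n. s < n \<and> n < t \<longrightarrow> \<not> hits_min \<gamma> th0 d ls n"
    using Suc.prems(2) unfolding hit_lab_Suc by blast
  have "hit_lab \<gamma> th0 d ls' k = enat s" using Suc.IH[of s] Suc.prems(1) s(1,2) by simp
  moreover have "\<forall>n. s < n \<and> n < t \<longrightarrow> \<not> hits_min \<gamma> th0 d ls' n"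
    using s(4) same_hits by simp
  ultimately show ?case
    unfolding hit_lab_Suc using s(2,3) same_hits[of t] by auto
qed

lemma depends_upto_hit_lab: "depends_upto t (\<lambda>ls. hit_lab \<gamma> th0 d ls k = enat t)"
  unfolding depends_upto_def
proof (intro allI impI)
  fix ls ls' :: "nat \<Rightarrow> nat" assume "\<forall>j\<le>t. ls j = ls' j"
  then show "(hit_lab \<gamma> th0 d ls k = enat t) = (hit_lab \<gamma> th0 d ls' k = enat t)"
    using hit_lab_transfer[of t ls ls'] hit_lab_transfer[of t ls' ls] by auto
qed

lemma depends_upto_theta_lab: "n \<le> n' \<Longrightarrow> depends_upto n' (\<lambda>ls. P (theta_lab \<gamma> th0 ls n))"
  unfolding depends_upto_def
proof (intro allI impI)
  fix ls ls' :: "nat \<Rightarrow> nat" assume "n \<le> n'" "\<forall>j\<le>n'. ls j = ls' j"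
  then have "theta_lab \<gamma> th0 ls n = theta_lab \<gamma> th0 ls' n" by (intro theta_lab_cong) auto
  then show "P (theta_lab \<gamma> th0 ls n) = P (theta_lab \<gamma> th0 ls' n)" by simp
qed

locale wang_landau =
  fixes lam :: "'a::topological_space measure" and \<pi> :: "'a \<Rightarrow> real" and I :: "'a \<Rightarrow> nat"
    and d :: nat and q :: "'a \<Rightarrow> 'a \<Rightarrow> real" and \<gamma> :: "nat \<Rightarrow> real"
    and M :: "'b measure" and X :: "nat \<Rightarrow> 'b \<Rightarrow> 'a" and th0 :: "nat \<Rightarrow> real"
  assumes lam_borel: "sets lam = sets borel"
    and d_ge: "2 \<le> d"
    and pi_meas: "\<pi> \<in> borel_measurable lam"
    and pi_int: "integrable lam \<pi>"
    and pi_prob: "(\<integral>x. \<pi> x \<partial>lam) = 1"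
    and I_meas: "I \<in> measurable lam (count_space UNIV)"
    and I_range: "\<forall>x. I x \<in> {1..d}"
    and A1_inf: "\<exists>c>0. \<forall>x. c \<le> \<pi> x"
    and A1_sup: "\<exists>C. \<forall>x. \<pi> x \<le> C"
    and A1_theta: "0 < Min (theta_star lam \<pi> I ` {1..d})"
    and q_int: "\<forall>x. integrable lam (q x)"
    and q_dens: "\<forall>x. (\<integral>y. q x y \<partial>lam) = 1"
    and A2_q: "\<exists>c>0. \<forall>x y. c \<le> q x y"
    and gamma_range: "\<forall>n\<ge>1. 0 \<le> \<gamma> n \<and> \<gamma> n < 1"
    and M_prob: "prob_space M"
    and X_meas: "\<forall>n. X n \<in> measurable M lam"
    and th0: "th0 \<in> Theta d"
    and dynamics: "\<forall>n. \<forall>A\<in>sets lam. AE \<omega> in M.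
        real_cond_exp M (nat_filtration M lam X n) (\<lambda>\<omega>. indicator A (X (Suc n) \<omega>)) \<omega>
        = MH_kernel lam q (pi_theta d lam \<pi> I (wl_theta \<gamma> I th0 (\<lambda>j. X j \<omega>) n)) (X n \<omega>) A"
begin

abbreviation F :: "nat \<Rightarrow> 'b measure" where "F \<equiv> nat_filtration M lam X"

definition lab :: "'b \<Rightarrow> nat \<Rightarrow> nat" where "lab \<omega> j = I (X j \<omega>)"

abbreviation th :: "'b \<Rightarrow> nat \<Rightarrow> nat \<Rightarrow> real" where "th \<omega> n \<equiv> theta_lab \<gamma> th0 (lab \<omega>) n"

lemma space_lam: "space lam = UNIV"
  using sets_eq_imp_space_eq[OF lam_borel] by simp

lemma lab_range: "lab \<omega> j \<in> {1..d}"
  unfolding lab_def using I_range by simp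

lemma wl_theta_eq_th: "wl_theta \<gamma> I th0 (\<lambda>j. X j \<omega>) = th \<omega>"
  unfolding lab_def[abs_def] by (rule ext) (rule wl_theta_eq_theta_lab)

lemma th_simplex: "th \<omega> n \<in> prob_simplex d"
  using theta_lab_simplex[of th0 d \<gamma>] Theta_subset_simplex th0 gamma_range lab_range by blast

lemma cell_sets: "{y. I y = v} \<in> sets lam"
  using measurable_sets[OF I_meas, of "{v}"] space_lam by (simp add: vimage_def)

definition generators :: "nat \<Rightarrow> 'b set set" where
  "generators n = (\<Union>j\<in>{..n}. {X j -` A \<inter> space M | A. A \<in> sets lam})"

lemma generators_Pow: "generators n \<subseteq> Pow (space M)"
  unfolding generators_def by auto

lemma F_space: "space (F n) = space M"
  unfolding nat_filtration_def generators_def[symmetric] using generators_Pow by simp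

lemma F_sets: "sets (F n) = sigma_sets (space M) (generators n)"
  unfolding nat_filtration_def generators_def[symmetric] using generators_Pow by simp

lemma F_sub: "sets (F n) \<subseteq> sets M"
  unfolding F_sets using X_meas
  by (intro sets.sigma_sets_subset) (auto simp: generators_def intro: measurable_sets)

lemma F_mono: "n \<le> m \<Longrightarrow> sets (F n) \<subseteq> sets (F m)"
proof -
  assume "n \<le> m"
  then have "generators n \<subseteq> generators m" unfolding generators_def by (intro UN_mono) auto
  then show ?thesis unfolding F_sets by (rule sigma_sets_subseteq)
qed

lemma F_sigma_finite: "sigma_finite_subalgebra M (F n)"
proof -
  interpret prob_space M by (rule M_prob)
  interpret finite_measure_subalgebra M "F n"
    by unfold_locales (auto simp: subalgebra_def F_space F_sub)
  show ?thesis by unfold_locales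
qed

lemma lab_F_measurable: "j \<le> n \<Longrightarrow> (\<lambda>\<omega>. lab \<omega> j) \<in> measurable (F n) (count_space UNIV)"
proof -
  assume j: "j \<le> n"
  have "X j \<in> measurable (F n) lam"
  proof (rule measurableI)
    fix A assume "A \<in> sets lam"
    then have "X j -` A \<inter> space M \<in> generators n" using j unfolding generators_def by blast
    then show "X j -` A \<inter> space (F n) \<in> sets (F n)" unfolding F_sets F_space by auto
  qed (simp add: space_lam)
  then show ?thesis unfolding lab_def using measurable_comp[OF _ I_meas] by (simp add: comp_def)
qed

definition labels_upto :: "nat \<Rightarrow> 'b \<Rightarrow> nat list" where
  "labels_upto n \<omega> = map (lab \<omega>) [0..<Suc n]"

lemma labels_upto_length: "length (labels_upto n \<omega>) = Suc n"
  unfolding labels_upto_def by (simp only: length_map length_upt diff_zero)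

lemma labels_upto_nth: "j < Suc n \<Longrightarrow> labels_upto n \<omega> ! j = lab \<omega> j"
  unfolding labels_upto_def by (subst nth_map) (simp_all only: length_upt nth_upt, simp_all)

lemma labels_upto_measurable: "labels_upto n \<in> measurable (F n) (count_space UNIV)"
proof (subst measurable_count_space_eq2_countable, intro conjI ballI)
  fix ys :: "nat list"
  show "labels_upto n -` {ys} \<inter> space (F n) \<in> sets (F n)"
  proof (cases "length ys = Suc n")
    case True
    have "labels_upto n -` {ys} \<inter> space (F n) = (\<Inter>j\<in>{..<Suc n}. (\<lambda>\<omega>. lab \<omega> j) -` {ys ! j} \<inter> space (F n))"
      using True by (auto simp: list_eq_iff_nth_eq labels_upto_length labels_upto_nth)
    also have "\<dots> \<in> sets (F n)"
      using lab_F_measurable by (intro sets.finite_INT) (auto intro!: measurable_sets)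
    finally show ?thesis .
  next
    case False
    then have "labels_upto n -` {ys} \<inter> space (F n) = {}" using labels_upto_length by auto
    then show ?thesis by simp
  qed
qed simp

lemma depends_upto_sets:
  assumes Q: "depends_upto n Q"
  shows "{\<omega>\<in>space M. Q (lab \<omega>)} \<in> sets (F n)"
proof -
  define extend :: "nat list \<Rightarrow> nat \<Rightarrow> nat" where "extend ys j = (if j < length ys then ys ! j else 0)" for ys j
  have "\<forall>j\<le>n. lab \<omega> j = extend (labels_upto n \<omega>) j" for \<omega>
    by (simp add: extend_def labels_upto_length labels_upto_nth less_Suc_eq_le)
  then have "Q (lab \<omega>) = Q (extend (labels_upto n \<omega>))" for \<omega>
    using Q unfolding depends_upto_def by blast
  then have "{\<omega>\<in>space M. Q (lab \<omega>)} = labels_upto n -` {ys. Q (extend ys)} \<inter> space (F n)"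
    by (auto simp: F_space)
  also have "\<dots> \<in> sets (F n)" using labels_upto_measurable by (rule measurable_sets) simp
  finally show ?thesis .
qed

lemma depends_upto_events: "depends_upto n Q \<Longrightarrow> {\<omega>\<in>space M. Q (lab \<omega>)} \<in> sets M"
  using depends_upto_sets F_sub by blast

lemma th_sets: "n \<le> n' \<Longrightarrow> {\<omega>\<in>space M. P (th \<omega> n)} \<in> sets (F n')"
  by (rule depends_upto_sets[OF depends_upto_theta_lab])

lemma lab_sets: "{\<omega>\<in>space M. lab \<omega> j = v} \<in> sets M"
  using depends_upto_events[of j "\<lambda>ls. ls j = v"] unfolding depends_upto_def by simp

lemma next_label_prob:
  assumes H: "H \<in> sets (F s)"
    and bound: "\<forall>\<omega>\<in>H. a \<le> MH_kernel lam q (pi_theta d lam \<pi> I (th \<omega> s)) (X s \<omega>) {y. I y = v}"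
  shows "a * measure M H \<le> measure M (H \<inter> {\<omega>\<in>space M. lab \<omega> (Suc s) = v})"
proof (rule prob_ge_from_cond_exp[OF M_prob F_sigma_finite H lab_sets])
  define Y where "Y = {\<omega>\<in>space M. lab \<omega> (Suc s) = v}"
  have "AE \<omega> in M. real_cond_exp M (F s) (indicator Y) \<omega>
                  = real_cond_exp M (F s) (\<lambda>\<omega>. indicator {y. I y = v} (X (Suc s) \<omega>)) \<omega>"
    using lab_sets X_meas cell_sets
    by (intro sigma_finite_subalgebra.real_cond_exp_cong[OF F_sigma_finite] AE_I2) (auto simp: Y_def lab_def indicator_def)
  moreover have "AE \<omega> in M. real_cond_exp M (F s) (\<lambda>\<omega>. indicator {y. I y = v} (X (Suc s) \<omega>)) \<omega>
      = MH_kernel lam q (pi_theta d lam \<pi> I (th \<omega> s)) (X s \<omega>) {y. I y = v}"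
    using dynamics cell_sets by (simp add: wl_theta_eq_th)
  ultimately show "AE \<omega>\<in>H in M. a \<le> real_cond_exp M (F s) (indicator Y) \<omega>"
    using bound by auto
qed

lemma next_label_prob_target:
  assumes H: "H \<in> sets (F s)" and tgt_sets: "\<And>v. {\<omega>\<in>space M. tgt \<omega> = v} \<in> sets (F s)"
    and bound: "\<forall>\<omega>\<in>H. tgt \<omega> \<in> {1..d} \<and>
       a \<le> MH_kernel lam q (pi_theta d lam \<pi> I (th \<omega> s)) (X s \<omega>) {y. I y = tgt \<omega>}"
  shows "a * measure M H \<le> measure M (H \<inter> {\<omega>\<in>space M. lab \<omega> (Suc s) = tgt \<omega>})"
proof -
  interpret prob_space M by (rule M_prob)
  define Hv where "Hv v = H \<inter> {\<omega>\<in>space M. tgt \<omega> = v}" for v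
  define Yv where "Yv v = Hv v \<inter> {\<omega>\<in>space M. lab \<omega> (Suc s) = v}" for v
  have Hv_F: "Hv v \<in> sets (F s)" for v unfolding Hv_def using H tgt_sets by auto
  have Hv_M: "Hv v \<in> sets M" for v using Hv_F F_sub by blast
  have Yv_M: "Yv v \<in> sets M" for v unfolding Yv_def using Hv_M lab_sets by auto
  have Hsp: "H \<subseteq> space M" using H F_sub sets.sets_into_space by blast
  have H_eq: "H = (\<Union>v\<in>{1..d}. Hv v)" unfolding Hv_def using bound Hsp by auto
  have HY_eq: "H \<inter> {\<omega>\<in>space M. lab \<omega> (Suc s) = tgt \<omega>} = (\<Union>v\<in>{1..d}. Yv v)"
    unfolding Yv_def Hv_def using bound Hsp by auto
  have "measure M H = (\<Sum>v\<in>{1..d}. measure M (Hv v))"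
    unfolding H_eq using Hv_M
    by (intro finite_measure_finite_Union) (auto simp: disjoint_family_on_def Hv_def)
  moreover have "measure M (H \<inter> {\<omega>\<in>space M. lab \<omega> (Suc s) = tgt \<omega>}) = (\<Sum>v\<in>{1..d}. measure M (Yv v))"
    unfolding HY_eq using Yv_M
    by (intro finite_measure_finite_Union) (auto simp: disjoint_family_on_def Yv_def Hv_def)
  moreover have "a * measure M (Hv v) \<le> measure M (Yv v)" for v
    unfolding Yv_def using bound by (intro next_label_prob[OF Hv_F]) (auto simp: Hv_def)
  ultimately show ?thesis by (simp add: sum_distrib_left sum_mono)
qed

definition q_inf :: real where "q_inf = Inf (range (case_prod q))"
definition pi_sup :: real where "pi_sup = Sup (range \<pi>)"
definition theta_star_min :: real where "theta_star_min = Min (theta_star lam \<pi> I ` {1..d})"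

text \<open>b bounds from below the probability of one prescribed move into a cell whose weight is
  at most that of the current cell; rho is the extra loss factor of the first move.\<close>
definition b :: real where "b = q_inf / pi_sup * theta_star_min"
definition rho :: real where "rho = (1 - \<gamma> 1) / (1 + \<gamma> 1)"

lemma pi_pos: "0 < \<pi> x"
  using A1_inf by (meson less_le_trans)

lemma pi_le_sup: "\<pi> x \<le> pi_sup"
  unfolding pi_sup_def using A1_sup by (intro cSup_upper) (auto simp: bdd_above_def)

lemma pi_sup_pos: "0 < pi_sup"
  using pi_pos pi_le_sup by (meson less_le_trans)

lemma q_ge_inf: "q_inf \<le> q x y"
proof -
  have "bdd_below (range (case_prod q))" using A2_q unfolding bdd_below_def by force
  then have "Inf (range (case_prod q)) \<le> case_prod q (x, y)" by (intro cInf_lower) auto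
  then show ?thesis unfolding q_inf_def by simp
qed

lemma q_inf_pos: "0 < q_inf"
proof -
  obtain c where c: "c > 0" "\<forall>x y. c \<le> q x y" using A2_q by blast
  have "c \<le> q_inf" unfolding q_inf_def using c by (intro cInf_greatest) auto
  then show ?thesis using c by simp
qed

lemma theta_star_min_le: "i \<in> {1..d} \<Longrightarrow> theta_star_min \<le> theta_star lam \<pi> I i"
  unfolding theta_star_min_def by (intro Min_le) auto

lemma theta_star_min_pos: "0 < theta_star_min"
  unfolding theta_star_min_def by (rule A1_theta)

lemma theta_star_pos: "i \<in> {1..d} \<Longrightarrow> 0 < theta_star lam \<pi> I i"
  using theta_star_min_le theta_star_min_pos by (meson less_le_trans)

lemma theta_star_le1: "theta_star lam \<pi> I i \<le> 1"
proof -
  have cell: "{x \<in> space lam. I x = i} \<in> sets lam" using cell_sets[of i] space_lam by simp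
  have "theta_star lam \<pi> I i = (LINT x|lam. indicator {x \<in> space lam. I x = i} x * \<pi> x)"
    unfolding theta_star_def set_lebesgue_integral_def by simp
  also have "\<dots> \<le> (LINT x|lam. \<pi> x)"
    using integrable_mult_indicator[OF cell pi_int] pi_int pi_pos
    by (intro integral_mono) (auto simp: indicator_def less_imp_le)
  finally show ?thesis using pi_prob by simp
qed

text \<open>Since both q(x,.) and pi are probability densities, inf q \<le> sup pi; hence b \<le> 1.\<close>
lemma q_inf_le_pi_sup: "q_inf \<le> pi_sup"
proof (rule ccontr)
  assume "\<not> q_inf \<le> pi_sup"
  then have gap: "0 < q x y - \<pi> y" for x y using q_ge_inf[of x y] pi_le_sup[of y] by linarith
  fix x
  have "integral\<^sup>L lam (\<lambda>y. q x y - \<pi> y) = 0"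
    using q_int pi_int q_dens pi_prob by simp
  then have "AE y in lam. q x y - \<pi> y = 0"
    using integral_nonneg_eq_0_iff_AE[of lam "\<lambda>y. q x y - \<pi> y"] q_int pi_int gap
    by (simp add: less_imp_le)
  then have "AE y in lam. \<pi> y = 0" using gap by (auto elim: AE_mp simp: less_le)
  then have "integral\<^sup>L lam \<pi> = 0" by (rule integral_eq_zero_AE)
  then show False using pi_prob by simp
qed

lemma b_pos: "0 < b"
  unfolding b_def using q_inf_pos pi_sup_pos theta_star_min_pos by simp

lemma b_le1: "b \<le> 1"
proof -
  have "theta_star_min \<le> 1" using theta_star_min_le[of 1] theta_star_le1[of 1] d_ge by auto
  moreover have "q_inf / pi_sup \<le> 1" using q_inf_le_pi_sup pi_sup_pos by simp
  ultimately show ?thesis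
    unfolding b_def using q_inf_pos pi_sup_pos theta_star_min_pos by (intro mult_le_one) auto
qed

lemma gamma1: "0 \<le> \<gamma> 1" "\<gamma> 1 < 1" using gamma_range by auto

lemma rho_pos: "0 < rho" unfolding rho_def using gamma1 by simp
lemma rho_le1: "rho \<le> 1" unfolding rho_def using gamma1 by simp

lemma kernel_cell_bound:
  assumes i: "i \<in> {1..d}"
  shows "q_inf / pi_sup * theta_star lam \<pi> I i * min 1 (th \<omega> s (I x) / th \<omega> s i)
         \<le> MH_kernel lam q (pi_theta d lam \<pi> I (th \<omega> s)) x {y. I y = i}"
  by (rule MH_kernel_cell_lower_bound[OF space_lam pi_meas _ _ pi_int I_meas I_range _ q_int q_dens _ _ _ i])
     (use pi_pos pi_le_sup theta_star_pos q_ge_inf q_inf_pos prob_simplex_pos[OF th_simplex] in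
       \<open>auto simp: less_imp_le\<close>)

definition im :: "nat \<Rightarrow> 'b \<Rightarrow> nat" where "im n \<omega> = i_max d (\<gamma> 1) (th \<omega> n)"
definition ordn :: "nat \<Rightarrow> 'b \<Rightarrow> nat \<Rightarrow> nat" where "ordn n \<omega> = ord_idx d (th \<omega> n)"

definition ladder :: "nat \<Rightarrow> nat \<Rightarrow> 'b set" where
  "ladder n r = {\<omega>\<in>space M. \<forall>j\<in>{1..r}. j \<le> im n \<omega> \<longrightarrow> lab \<omega> (n + j) = ordn n \<omega> (im n \<omega> - j + 1)}"

lemma ladder_0: "ladder n 0 = space M"
  unfolding ladder_def by auto

lemma ladder_F: "ladder n r \<in> sets (F (n + r))"
proof -
  define Q where "Q ls \<longleftrightarrow> (\<forall>j\<in>{1..r}. j \<le> i_max d (\<gamma> 1) (theta_lab \<gamma> th0 ls n) \<longrightarrow>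
      ls (n + j) = ord_idx d (theta_lab \<gamma> th0 ls n) (i_max d (\<gamma> 1) (theta_lab \<gamma> th0 ls n) - j + 1))"
    for ls
  have "depends_upto (n + r) Q"
    unfolding depends_upto_def
  proof (intro allI impI)
    fix ls ls' :: "nat \<Rightarrow> nat" assume same: "\<forall>j\<le>n + r. ls j = ls' j"
    then have "theta_lab \<gamma> th0 ls n = theta_lab \<gamma> th0 ls' n" by (intro theta_lab_cong) auto
    then show "Q ls = Q ls'" using same unfolding Q_def by auto
  qed
  from depends_upto_sets[OF this] show ?thesis unfolding ladder_def im_def ordn_def Q_def .
qed

lemma ladder_full:
  "\<omega> \<in> ladder n d \<longleftrightarrow>
     \<omega> \<in> space M \<and> (\<forall>j\<in>{1..im n \<omega>}. lab \<omega> (n + j) = ordn n \<omega> (im n \<omega> - j + 1))"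
proof -
  have "im n \<omega> \<le> d" unfolding im_def by (rule i_max_le)
  then have "(\<forall>j\<in>{1..d}. j \<le> im n \<omega> \<longrightarrow> P j) \<longleftrightarrow> (\<forall>j\<in>{1..im n \<omega>}. P j)" for P
    by auto
  then show ?thesis unfolding ladder_def by simp
qed

definition target :: "nat \<Rightarrow> nat \<Rightarrow> 'b \<Rightarrow> nat" where "target n r \<omega> = ordn n \<omega> (im n \<omega> - r)"

lemma target_range: "Suc r \<le> im n \<omega> \<Longrightarrow> target n r \<omega> \<in> {1..d}"
  unfolding target_def ordn_def im_def using i_max_le[of d "\<gamma> 1" "th \<omega> n"]
  by (intro ord_idx_range) auto

lemma ladder_Suc:
  "\<omega> \<in> ladder n (Suc r) \<longleftrightarrow>
     \<omega> \<in> ladder n r \<and> (Suc r \<le> im n \<omega> \<longrightarrow> lab \<omega> (Suc (n + r)) = target n r \<omega>)"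
proof -
  have "im n \<omega> - Suc r + 1 = im n \<omega> - r" if "Suc r \<le> im n \<omega>" using that by simp
  then show ?thesis unfolding ladder_def target_def by (auto simp: atLeastAtMostSuc_conv)
qed

text \<open>First move: by definition of i_m, the weight of (i_m) is below (1+g)/(1-g) times the
  minimal weight, in particular below that of the current cell divided by rho.\<close>
lemma first_move_ratio:
  assumes "1 \<le> im n \<omega>"
  shows "rho \<le> th \<omega> n (lab \<omega> n) / th \<omega> n (target n 0 \<omega>)"
proof -
  let ?t = "th \<omega> n"
  have v: "target n 0 \<omega> \<in> {1..d}" using target_range assms by simp
  have "?t (target n 0 \<omega>) < theta_min d ?t * (1 + \<gamma> 1) / (1 - \<gamma> 1)"
    using i_max_below_threshold[of d "\<gamma> 1" ?t] assms by (simp add: target_def ordn_def im_def)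
  then have "rho * ?t (target n 0 \<omega>) \<le> theta_min d ?t"
    using gamma1 rho_pos by (simp add: rho_def field_simps)
  also have "\<dots> \<le> ?t (lab \<omega> n)" using lab_range by (intro theta_min_le)
  finally show ?thesis
    using prob_simplex_pos[OF th_simplex v] by (simp add: pos_le_divide_eq)
qed

text \<open>Later moves: after r \<ge> 1 steps on the ladder the chain sits in (i_m - r + 1); the
  target (i_m - r) had a smaller weight at time n and has not been visited since, so its
  weight is still not larger.\<close>
lemma later_move_ratio:
  assumes L: "\<omega> \<in> ladder n r" and r: "0 < r" and D: "Suc r \<le> im n \<omega>"
  shows "1 \<le> th \<omega> (n + r) (lab \<omega> (n + r)) / th \<omega> (n + r) (target n r \<omega>)"
proof -
  define i where "i = im n \<omega>"
  have i1: "i \<in> {1..d}" using i_max_le D unfolding i_def im_def by (simp add: i_max_le)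
  have steps: "lab \<omega> (n + j) = ordn n \<omega> (i - j + 1)" if "j \<in> {1..r}" for j
    using L D that unfolding ladder_def i_def by auto
  let ?u = "ordn n \<omega> (i - r + 1)" and ?v = "target n r \<omega>"
  have v: "?v \<in> {1..d}" using target_range D by simp
  have u: "?u \<in> {1..d}" unfolding ordn_def using i1 D r i_def by (intro ord_idx_range) auto
  have below: "th \<omega> n ?v \<le> th \<omega> n ?u"
    unfolding ordn_def target_def i_def[symmetric] using i1 D r i_def by (intro ord_idx_mono) auto
  have unvisited: "\<forall>j\<in>{1..r}. lab \<omega> (n + j) \<noteq> ?v"
  proof
    fix j assume j: "j \<in> {1..r}"
    have "i - j + 1 \<in> {1..d}" "i - r \<in> {1..d}" "i - j + 1 \<noteq> i - r"
      using j D i1 unfolding i_def by auto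
    then show "lab \<omega> (n + j) \<noteq> ?v"
      using steps[OF j] ord_idx_inj unfolding target_def ordn_def i_def by metis
  qed
  have "th \<omega> (n + r) ?v \<le> th \<omega> (n + r) ?u"
    using theta_lab_order[OF _ gamma_range _ u v below unvisited] Theta_subset_simplex th0 lab_range
    by blast
  moreover have "lab \<omega> (n + r) = ?u" using steps[of r] r by simp
  ultimately show ?thesis using prob_simplex_pos[OF th_simplex v] by simp
qed

definition step_prob :: "nat \<Rightarrow> real" where "step_prob r = (if r = 0 then rho * b else b)"

lemma step_prob_pos: "0 < step_prob r"
  unfolding step_prob_def using rho_pos b_pos by simp

lemma step_prob_le1: "step_prob r \<le> 1"
  unfolding step_prob_def using rho_pos rho_le1 b_pos b_le1 by (simp add: mult_le_one)

lemma ladder_move_kernel_bound: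
  assumes L: "\<omega> \<in> ladder n r" and D: "Suc r \<le> im n \<omega>"
  shows "step_prob r \<le> MH_kernel lam q (pi_theta d lam \<pi> I (th \<omega> (n + r))) (X (n + r) \<omega>)
           {y. I y = target n r \<omega>}"
proof -
  let ?v = "target n r \<omega>"
  have v: "?v \<in> {1..d}" using target_range D by simp
  have ratio: "(if r = 0 then rho else 1) \<le> min 1 (th \<omega> (n + r) (lab \<omega> (n + r)) / th \<omega> (n + r) ?v)"
    using first_move_ratio[of n \<omega>] later_move_ratio[OF L _ D] D rho_le1 by auto
  have "step_prob r = q_inf / pi_sup * theta_star_min * (if r = 0 then rho else 1)"
    unfolding step_prob_def b_def by simp
  also have "\<dots> \<le> q_inf / pi_sup * theta_star lam \<pi> I ?v * min 1 (th \<omega> (n + r) (lab \<omega> (n + r)) / th \<omega> (n + r) ?v)"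
    using q_inf_pos pi_sup_pos theta_star_min_le[OF v] theta_star_min_pos ratio rho_pos
    by (intro mult_mono) auto
  also have "\<dots> \<le> MH_kernel lam q (pi_theta d lam \<pi> I (th \<omega> (n + r))) (X (n + r) \<omega>) {y. I y = ?v}"
    using kernel_cell_bound[OF v, of \<omega> "n + r" "X (n + r) \<omega>"] unfolding lab_def .
  finally show ?thesis .
qed

text \<open>One more ladder move, conditioned on the past: on the part of H \<inter> ladder n r where the
  ladder is still active, the prescribed move happens with probability at least step_prob r;
  elsewhere the ladder event persists automatically.\<close>
lemma ladder_step_prob:
  assumes H: "H \<in> sets (F n)"
  shows "step_prob r * measure M (H \<inter> ladder n r) \<le> measure M (H \<inter> ladder n (Suc r))"
proof -
  interpret prob_space M by (rule M_prob)
  define Hr where "Hr = H \<inter> ladder n r"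
  define L where "L = H \<inter> ladder n (Suc r)"
  define D where "D = {\<omega>\<in>space M. Suc r \<le> im n \<omega>}"
  have Hr_F: "Hr \<in> sets (F (n + r))" unfolding Hr_def using H F_mono[of n "n + r"] ladder_F by auto
  have D_F: "D \<in> sets (F (n + r))" unfolding D_def im_def by (rule th_sets) simp
  have target_F: "{\<omega>\<in>space M. target n r \<omega> = v} \<in> sets (F (n + r))" for v
    unfolding target_def ordn_def im_def
    by (rule th_sets[of n _ "\<lambda>t. ord_idx d t (i_max d (\<gamma> 1) t - r) = v"]) simp
  have Hr_M: "Hr \<in> events" and D_M: "D \<in> events" using Hr_F D_F F_sub by auto
  have L_M: "L \<in> events" unfolding L_def using H ladder_F F_sub by blast
  have "step_prob r * prob (Hr \<inter> D)
      \<le> prob (Hr \<inter> D \<inter> {\<omega>\<in>space M. lab \<omega> (Suc (n + r)) = target n r \<omega>})"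
    using ladder_move_kernel_bound target_range Hr_F D_F
    by (intro next_label_prob_target[OF _ target_F]) (auto simp: Hr_def D_def)
  also have "Hr \<inter> D \<inter> {\<omega>\<in>space M. lab \<omega> (Suc (n + r)) = target n r \<omega>} = L \<inter> D"
    unfolding Hr_def L_def D_def using ladder_Suc by auto
  finally have moved: "step_prob r * prob (Hr \<inter> D) \<le> prob (L \<inter> D)" .
  have stay: "L - D = Hr - D"
    unfolding Hr_def L_def D_def using ladder_Suc ladder_def by auto
  have "step_prob r * prob (Hr - D) \<le> prob (Hr - D)"
    using step_prob_le1 step_prob_pos by (intro mult_left_le_one_le) (auto simp: less_imp_le)
  moreover have "prob Hr = prob (Hr \<inter> D) + prob (Hr - D)" "prob L = prob (L \<inter> D) + prob (L - D)"
    using finite_measure_Diff'[OF Hr_M D_M] finite_measure_Diff'[OF L_M D_M] by simp_all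
  ultimately have "step_prob r * prob Hr \<le> prob L"
    using moved stay by (simp add: distrib_left)
  then show ?thesis unfolding Hr_def L_def .
qed

lemma ladder_prob:
  assumes H: "H \<in> sets (F n)"
  shows "(\<Prod>j<r. step_prob j) * measure M H \<le> measure M (H \<inter> ladder n r)"
proof (induction r)
  case 0
  have "H \<subseteq> space M" using H F_sub sets.sets_into_space by blast
  then show ?case by (simp add: ladder_0 Int_absorb2)
next
  case (Suc r)
  have "(\<Prod>j<Suc r. step_prob j) * measure M H = step_prob r * ((\<Prod>j<r. step_prob j) * measure M H)"
    by simp
  also have "\<dots> \<le> step_prob r * measure M (H \<inter> ladder n r)"
    using Suc step_prob_pos[of r] by (intro mult_left_mono) auto
  also have "\<dots> \<le> measure M (H \<inter> ladder n (Suc r))" by (rule ladder_step_prob[OF H])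
  finally show ?case .
qed

lemma prod_step_prob: "0 < r \<Longrightarrow> (\<Prod>j<r. step_prob j) = rho * b ^ r"
proof (induction r)
  case (Suc r)
  then show ?case by (cases r) (auto simp: step_prob_def)
qed simp

definition p0 :: real where "p0 = rho * b ^ d"

lemma p0_pos: "0 < p0" unfolding p0_def using rho_pos b_pos by simp

lemma p0_le1: "p0 \<le> 1"
  unfolding p0_def using rho_pos rho_le1 b_pos b_le1 by (simp add: mult_le_one power_le_one)

definition A_event :: "nat \<Rightarrow> nat \<Rightarrow> 'b set" where
  "A_event k m = {\<omega>\<in>space M. \<exists>t. hit_lab \<gamma> th0 d (lab \<omega>) k = enat t \<and>
     (\<forall>j\<in>{1..im (t + m * d) \<omega>}. lab \<omega> (t + m * d + j) = ordn (t + m * d) \<omega> (im (t + m * d) \<omega> - j + 1))}"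

lemma A_event_eq_ladder:
  "A_event k m = (\<Union>t. {\<omega>\<in>space M. hit_lab \<gamma> th0 d (lab \<omega>) k = enat t} \<inter> ladder (t + m * d) d)"
  by (auto simp: A_event_def ladder_full)

lemma A_event_sets: "A_event k m \<in> sets M"
  unfolding A_event_eq_ladder
  using depends_upto_events[OF depends_upto_hit_lab] ladder_F F_sub by blast

definition restart_time :: "nat \<Rightarrow> nat \<Rightarrow> 'b \<Rightarrow> enat" where
  "restart_time k m \<omega> = hit_lab \<gamma> th0 d (lab \<omega>) k + enat (m * d)"

lemma restart_time_eq_iff:
  "restart_time k m \<omega> = enat n \<longleftrightarrow> m * d \<le> n \<and> hit_lab \<gamma> th0 d (lab \<omega>) k = enat (n - m * d)"
  unfolding restart_time_def by (cases "hit_lab \<gamma> th0 d (lab \<omega>) k") auto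

lemma restart_time_F: "{\<omega>\<in>space M. restart_time k m \<omega> = enat n} \<in> sets (F n)"
  using depends_upto_sets[OF depends_upto_mono[OF depends_upto_hit_lab[of "n - m * d" \<gamma> th0 d k], of n]]
  unfolding restart_time_eq_iff by (cases "m * d \<le> n") auto

text \<open>Key estimate: slice an event B prior to T_k + m d according to the value n of that
  time; each slice is an F_n-event, so the ladder bound applies to it.\<close>
lemma A_event_prob_ge:
  assumes fin: "AE \<omega> in M. hit_lab \<gamma> th0 d (lab \<omega>) k \<noteq> \<infinity>"
    and B: "B \<in> sets (stopped_sigma M F (restart_time k m))"
  shows "p0 * measure M B \<le> measure M (B \<inter> A_event k m)"
proof -
  interpret prob_space M by (rule M_prob)
  let ?\<tau> = "restart_time k m" and ?A = "A_event k m"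
  have B_M: "B \<in> events"
    using B stopped_sigma_subalgebra[of M F ?\<tau>] unfolding subalgebra_def by blast
  have fin': "AE \<omega> in M. ?\<tau> \<omega> \<noteq> \<infinity>" using fin by (auto simp: restart_time_def)
  have slice_F: "{\<omega>\<in>B. ?\<tau> \<omega> = enat n} \<in> sets (F n)" for n
    by (rule stopped_sigma_slice[OF F_mono restart_time_F B])
  have slice_M: "{\<omega>\<in>B. ?\<tau> \<omega> = enat n} \<in> events" for n using slice_F F_sub by blast
  have sliceA_M: "{\<omega>\<in>B \<inter> ?A. ?\<tau> \<omega> = enat n} \<in> events" for n
    using sets.Int[OF slice_M A_event_sets] by (simp add: Collect_conj_eq Int_ac)
  have each: "p0 * prob {\<omega>\<in>B. ?\<tau> \<omega> = enat n} \<le> prob {\<omega>\<in>B \<inter> ?A. ?\<tau> \<omega> = enat n}" for n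
  proof -
    have "p0 * prob {\<omega>\<in>B. ?\<tau> \<omega> = enat n} \<le> prob ({\<omega>\<in>B. ?\<tau> \<omega> = enat n} \<inter> ladder n d)"
      using ladder_prob[OF slice_F, of d] prod_step_prob[of d] d_ge by (simp add: p0_def)
    also have "\<dots> \<le> prob {\<omega>\<in>B \<inter> ?A. ?\<tau> \<omega> = enat n}"
    proof (rule finite_measure_mono[OF _ sliceA_M])
      show "{\<omega>\<in>B. ?\<tau> \<omega> = enat n} \<inter> ladder n d \<subseteq> {\<omega>\<in>B \<inter> ?A. ?\<tau> \<omega> = enat n}"
      proof
        fix \<omega> assume \<omega>: "\<omega> \<in> {\<omega>\<in>B. ?\<tau> \<omega> = enat n} \<inter> ladder n d"
        then have "m * d \<le> n" "hit_lab \<gamma> th0 d (lab \<omega>) k = enat (n - m * d)"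
          by (auto simp: restart_time_eq_iff)
        then have "\<omega> \<in> ?A"
          using \<omega> ladder_F[of n d] unfolding A_event_eq_ladder
          by (intro UN_I[of "n - m * d"]) (auto simp: ladder_def)
        then show "\<omega> \<in> {\<omega>\<in>B \<inter> ?A. ?\<tau> \<omega> = enat n}" using \<omega> by simp
      qed
    qed
    finally show ?thesis .
  qed
  have "(\<lambda>n. p0 * prob {\<omega>\<in>B. ?\<tau> \<omega> = enat n}) sums (p0 * prob B)"
    by (rule sums_mult[OF prob_sums_over_time[OF B_M fin' slice_M]])
  moreover have "(\<lambda>n. prob {\<omega>\<in>B \<inter> ?A. ?\<tau> \<omega> = enat n}) sums prob (B \<inter> ?A)"
    using B_M A_event_sets by (intro prob_sums_over_time[OF _ fin' sliceA_M]) auto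
  ultimately show ?thesis using each by (rule sums_le[rotated 1])
qed

corollary A_event_cond_prob:
  assumes "AE \<omega> in M. hit_lab \<gamma> th0 d (lab \<omega>) k \<noteq> \<infinity>"
  shows "AE \<omega> in M. p0 \<le> real_cond_exp M (stopped_sigma M F (restart_time k m)) (indicator (A_event k m)) \<omega>"
  by (rule cond_exp_ge_from_prob[OF M_prob stopped_sigma_finite_subalgebra[OF M_prob]
        A_event_sets A_event_prob_ge[OF assms]])

lemma hit_time_eq_hit_lab: "hit_time d (th \<omega>) I (\<lambda>j. X j \<omega>) k = hit_lab \<gamma> th0 d (lab \<omega>) k"
  unfolding hit_lab_def by (subst hit_time_labels) (simp add: lab_def[abs_def])

lemma A_event_original:
  "{\<omega> \<in> space M. \<exists>t. hit_time d (wl_theta \<gamma> I th0 (\<lambda>j. X j \<omega>)) I (\<lambda>j. X j \<omega>) k = enat t \<and>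
      (\<forall>j\<in>{1..i_max d (\<gamma> 1) (wl_theta \<gamma> I th0 (\<lambda>j. X j \<omega>) (t + m * d))}.
         I (X (t + m * d + j) \<omega>) = ord_idx d (wl_theta \<gamma> I th0 (\<lambda>j. X j \<omega>) (t + m * d))
           (i_max d (\<gamma> 1) (wl_theta \<gamma> I th0 (\<lambda>j. X j \<omega>) (t + m * d)) - j + 1))}
   = A_event k m"
  unfolding wl_theta_eq_th hit_time_eq_hit_lab A_event_def im_def ordn_def by (simp add: lab_def)

lemma restart_time_original:
  "(\<lambda>\<omega>. hit_time d (wl_theta \<gamma> I th0 (\<lambda>j. X j \<omega>)) I (\<lambda>j. X j \<omega>) k + enat (m * d)) = restart_time k m"
  unfolding wl_theta_eq_th hit_time_eq_hit_lab restart_time_def ..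

lemma p0_original:
  "(1 - \<gamma> 1) / (1 + \<gamma> 1) * ((Inf (range (case_prod q)) / Sup (range \<pi>))
      * Min (theta_star lam \<pi> I ` {1..d})) ^ d = p0"
  unfolding p0_def rho_def b_def q_inf_def pi_sup_def theta_star_min_def ..

end

theorem mainTheorem4:
  fixes lam :: "'a::polish_space measure" and \<pi> :: "'a \<Rightarrow> real" and I :: "'a \<Rightarrow> nat"
    and d :: nat and q :: "'a \<Rightarrow> 'a \<Rightarrow> real" and \<gamma> :: "nat \<Rightarrow> real"
    and M :: "'b measure" and X :: "nat \<Rightarrow> 'b \<Rightarrow> 'a" and x0 :: 'a and th0 :: "nat \<Rightarrow> real"
  assumes lam_borel: "sets lam = sets borel"
    and lam_sfin: "sigma_finite_measure lam"
    and d_ge: "2 \<le> d"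
    and pi_meas: "\<pi> \<in> borel_measurable lam"
    and pi_nonneg: "\<forall>x. 0 \<le> \<pi> x"
    and pi_int: "integrable lam \<pi>"
    and pi_prob: "(\<integral>x. \<pi> x \<partial>lam) = 1"
    and I_meas: "I \<in> measurable lam (count_space UNIV)"
    and I_range: "\<forall>x. I x \<in> {1..d}"
    and A1_inf: "\<exists>c>0. \<forall>x. c \<le> \<pi> x"
    and A1_sup: "\<exists>C. \<forall>x. \<pi> x \<le> C"
    and A1_theta: "0 < Min (theta_star lam \<pi> I ` {1..d})"
    and q_meas: "(\<lambda>(x, y). q x y) \<in> borel_measurable (lam \<Otimes>\<^sub>M lam)"
    and q_sym: "\<forall>x y. q x y = q y x"
    and q_int: "\<forall>x. integrable lam (q x)"
    and q_dens: "\<forall>x. (\<integral>y. q x y \<partial>lam) = 1"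
    and A2_q: "\<exists>c>0. \<forall>x y. c \<le> q x y"
    and gamma_range: "\<forall>n\<ge>1. 0 \<le> \<gamma> n \<and> \<gamma> n < 1"
    and M_prob: "prob_space M"
    and X_meas: "\<forall>n. X n \<in> measurable M lam"
    and X0: "\<forall>\<omega>\<in>space M. X 0 \<omega> = x0"
    and th0: "th0 \<in> Theta d"
    and dynamics: "\<forall>n. \<forall>A\<in>sets lam. AE \<omega> in M.
        real_cond_exp M (nat_filtration M lam X n) (\<lambda>\<omega>. indicator A (X (Suc n) \<omega>)) \<omega>
        = MH_kernel lam q (pi_theta d lam \<pi> I (wl_theta \<gamma> I th0 (\<lambda>j. X j \<omega>) n)) (X n \<omega>) A"
  shows "let p = (1 - \<gamma> 1) / (1 + \<gamma> 1)
                 * ((Inf (range (case_prod q)) / Sup (range \<pi>)) * Min (theta_star lam \<pi> I ` {1..d})) ^ d;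
             th = (\<lambda>\<omega>. wl_theta \<gamma> I th0 (\<lambda>j. X j \<omega>));
             T = (\<lambda>k \<omega>. hit_time d (th \<omega>) I (\<lambda>j. X j \<omega>) k);
             A = (\<lambda>k m. {\<omega> \<in> space M. \<exists>t. T k \<omega> = enat t \<and>
                    (\<forall>j\<in>{1..i_max d (\<gamma> 1) (th \<omega> (t + m * d))}.
                       I (X (t + m * d + j) \<omega>)
                       = ord_idx d (th \<omega> (t + m * d)) (i_max d (\<gamma> 1) (th \<omega> (t + m * d)) - j + 1))})
         in 0 < p \<and> p \<le> 1 \<and>
            (\<forall>k. (AE \<omega> in M. T k \<omega> \<noteq> \<infinity>) \<longrightarrow>
               (AE \<omega> in M. \<forall>m::nat.
                  p \<le> real_cond_exp M (stopped_sigma M (nat_filtration M lam X) (\<lambda>\<omega>. T k \<omega> + enat (m * d)))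
                         (indicator (A k m)) \<omega>))"
proof -
  interpret wang_landau lam \<pi> I d q \<gamma> M X th0
    by (intro wang_landau.intro) (fact assms)+
  show ?thesis
    unfolding Let_def p0_original restart_time_original A_event_original
    using p0_pos p0_le1 A_event_cond_prob
    by (simp add: wl_theta_eq_th hit_time_eq_hit_lab AE_all_countable)
qed

end
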